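(* There is an absolute constant $c>0$ such that the following holds. Let $N\ge1$, $M\ge4$ be integers, let $M'=2^n$ be the largest power of two with $M'(\log M'+2)\le M/2$ and assume $N\ge M'$. Let $b\le N$ be a positive integer multiple of $M'$ and let $k\in\mathbb N$. Then there is a 2D SLP $\mathcal G$ with at most $c\cdot(\log N+\log M+k)$ nonterminals such that for every $i\in[0..k]$, $\mathcal G$ contains a nonterminal $C_i$ with $\exp(C_i)=C_{N+i\cdot b,\,M}$.
   Context: Alphabet $\Sigma\supseteq\{0,1,\$\}$; logarithms are base 2. For $N=2^n$, $\mathsf{Bin}_N$ is the $N\times(n+2)$ array whose $i$-th row is $\$\,b_{i-1}\,\$$ with $b_{i-1}$ the $n$-bit binary representation of $i-1$; $\mathsf{ShiftBin}_N$ is the $2N\times N(n+2)$ array in which, for each $j\in[1..N]$, rows $j..j+N-1$ and columns $(j-1)(n+2)+1..j(n+2)$ form a copy of $\mathsf{Bin}_N$, all other entries being $0$. For integers $N\ge1$, $M\ge4$, let $M'=2^{n}$ be the largest power of two with $M'(\log M'+2)\le M/2$, assume $N\ge M'$, and let $B=\mathsf{ShiftBin}_{M'}$ (of size $2M'\times M'(\log M'+2)$). The 2D string $C_{N,M}$ of size $N\times M$ is the horizontal concatenation of three parts: (1) the left block, of width $M'(\log M'+2)$: $\lfloor N/(2M')\rfloor$ copies of $B$ stacked vertically, followed below by rows of $0$'s to reach height $N$; (2) the right block, of the same width: $M'$ rows of $0$'s, then $\lfloor (N-M')/(2M')\rfloor$ copies of $B$ stacked vertically, then rows of $0$'s to reach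 height $N$; (3) an all-$0$ block completing the width to $M$. A 2D SLP is a triple $(\mathcal V,\mathcal S,\rho)$ of nonterminals with dimensions, a start, and productions each being a character, a horizontal concatenation of two nonterminals of equal height, or a vertical concatenation of two nonterminals of equal width, with acyclic occurrence relation; $\exp(X)$ denotes the recursive expansion of $X$. *)

theory Defs
  imports Complex_Main
begin

datatype sym = S0 | S1 | SD

text \<open>A 2D string is represented as a list of rows (each row a list of symbols);
  all rows have equal length. Entries are 0-indexed.\<close>
type_synonym str2 = "sym list list"

definition mk2 :: "nat \<Rightarrow> nat \<Rightarrow> (nat \<Rightarrow> nat \<Rightarrow> sym) \<Rightarrow> str2" where
  "mk2 h w f = map (\<lambda>r. map (\<lambda>c. f r c) [0..<w]) [0..<h]"

definition width2 :: "str2 \<Rightarrow> nat" where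
  "width2 s = length (hd s)"

definition rect2 :: "str2 \<Rightarrow> bool" where
  "rect2 s \<longleftrightarrow> s \<noteq> [] \<and> (\<forall>r\<in>set s. length r = width2 s)"

text \<open>Bin_N with N = 2^n: row r (0-indexed) is dollar, n-bit binary of r (MSB first), dollar.\<close>
definition bin_entry :: "nat \<Rightarrow> nat \<Rightarrow> nat \<Rightarrow> sym" where
  "bin_entry n r c = (if c = 0 \<or> c = n + 1 then SD
      else if (r div 2 ^ (n - c)) mod 2 = 1 then S1 else S0)"

text \<open>ShiftBin_N with N = 2^n: size 2N x N(n+2).\<close>
definition shiftbin_entry :: "nat \<Rightarrow> nat \<Rightarrow> nat \<Rightarrow> sym" where
  "shiftbin_entry n r c = (let j = c div (n + 2); c' = c mod (n + 2) in
      if j \<le> r \<and> r < j + 2 ^ n then bin_entry n (r - j) c' else S0)"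

definition Mexp :: "nat \<Rightarrow> nat" where
  "Mexp M = (GREATEST n. real (2 ^ n * (n + 2)) \<le> real M / 2)"

definition Mprime :: "nat \<Rightarrow> nat" where
  "Mprime M = 2 ^ Mexp M"

definition C_entry :: "nat \<Rightarrow> nat \<Rightarrow> nat \<Rightarrow> nat \<Rightarrow> sym" where
  "C_entry N M r c = (let n = Mexp M; m = 2 ^ n; W = m * (n + 2) in
     if c < W then
       (if r div (2 * m) < N div (2 * m) then shiftbin_entry n (r mod (2 * m)) c else S0)
     else if c < 2 * W then
       (if r < m then S0
        else if (r - m) div (2 * m) < (N - m) div (2 * m)
             then shiftbin_entry n ((r - m) mod (2 * m)) (c - W) else S0)
     else S0)"

definition Cstr :: "nat \<Rightarrow> nat \<Rightarrow> str2" where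
  "Cstr N M = mk2 N M (C_entry N M)"

datatype rhs = Chr sym | HCat nat nat | VCat nat nat

record slp2 =
  nts :: "nat set"
  start :: nat
  prod :: "nat \<Rightarrow> rhs"

fun children :: "rhs \<Rightarrow> nat set" where
  "children (Chr a) = {}"
| "children (HCat Y Z) = {Y, Z}"
| "children (VCat Y Z) = {Y, Z}"

text \<open>Expansion relation: derives G X s means exp(X) = s. Horizontal
  concatenation requires equal heights, vertical requires equal widths.\<close>
inductive derives :: "slp2 \<Rightarrow> nat \<Rightarrow> str2 \<Rightarrow> bool" for G where
  chr: "X \<in> nts G \<Longrightarrow> prod G X = Chr a \<Longrightarrow> derives G X [[a]]"
| hcat: "X \<in> nts G \<Longrightarrow> prod G X = HCat Y Z \<Longrightarrow> derives G Y s \<Longrightarrow> derives G Z t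
         \<Longrightarrow> length s = length t \<Longrightarrow> derives G X (map2 (@) s t)"
| vcat: "X \<in> nts G \<Longrightarrow> prod G X = VCat Y Z \<Longrightarrow> derives G Y s \<Longrightarrow> derives G Z t
         \<Longrightarrow> width2 s = width2 t \<Longrightarrow> derives G X (s @ t)"

definition is_slp2 :: "slp2 \<Rightarrow> bool" where
  "is_slp2 G \<longleftrightarrow> finite (nts G) \<and> start G \<in> nts G
     \<and> (\<forall>X\<in>nts G. children (prod G X) \<subseteq> nts G)
     \<and> acyclic {(X, Y). X \<in> nts G \<and> Y \<in> children (prod G X)}
     \<and> (\<forall>X\<in>nts G. \<exists>s. derives G X s)"

end

theory Submission
  imports Defs "HOL-Library.Log_Nat"
begin

(* A finite set S of 2D strings in which every member is a single symbol or the horizontal or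
   vertical concatenation of two nonempty members of S is, in effect, a 2D SLP with one nonterminal
   per member. It therefore suffices to find such a set of size O(log N + log M + k) containing the
   strings C_{N+ib,M} for i <= k.

   Let M' = 2^n and W = M'(n+2). The string C_{x,M} is the horizontal concatenation of a left block,
   a right block and a zero block of width M - 2W. The left block is floor(x/2M') stacked copies of
   ShiftBin_{M'} followed by (x mod 2M') zero rows; the right block is M' zero rows above the left
   block for x - M'. ShiftBin_{M'} and Bin_{M'} are obtained by doubling from O(n) strings. A stack
   of y copies splits into stacks of floor(y/2) and ceil(y/2) copies, and the numbers floor(y/2^j) and
   floor(y/2^j) + 1 are closed under this splitting, so O(log N) stacks suffice for one y; the same
   holds for zero blocks of a given width or height. Since M' divides b, the numbers of copies for
   consecutive heights x_i = N + ib differ by floor(t/2) or ceil(t/2), where t = b/M', so each further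
   height costs O(1) strings; moreover the remainders x_i mod 2M' take only two values. *)

section \<open>Counting and division facts\<close>

lemma card_Un_le_add: "card A \<le> a \<Longrightarrow> card B \<le> b \<Longrightarrow> card (A \<union> B) \<le> a + b"
  using card_Un_le[of A B] by linarith

lemma card_three_le: "card {x, y, z} \<le> 3"
  by (simp add: card_insert_if)

lemma card_image_atMost_le: "card (f ` {..n}) \<le> n + 1"
  using card_image_le[of "{..n}" f] by simp

lemma card_UN_image_atMost_le:
  assumes "finite A"
  shows "card (\<Union>a\<in>A. f a ` {..n}) \<le> card A * (n + 1)"
proof -
  have "card (\<Union>a\<in>A. f a ` {..n}) \<le> (\<Sum>a\<in>A. card (f a ` {..n}))"
    using assms by (rule card_UN_le)
  also have "\<dots> \<le> (\<Sum>a\<in>A. n + 1)"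
    by (intro sum_mono card_image_atMost_le)
  finally show ?thesis
    by simp
qed

lemma card_image_Collect_atMost_le: "card (F ` {f i |i. i \<le> k \<and> P i}) \<le> k + 1"
proof -
  have "F ` {f i |i. i \<le> k \<and> P i} = (F \<circ> f) ` {i. i \<le> k \<and> P i}"
    by auto
  then have "card (F ` {f i |i. i \<le> k \<and> P i}) \<le> card {i. i \<le> k \<and> P i}"
    by (simp add: card_image_le)
  also have "\<dots> \<le> card {..k}"
    by (rule card_mono) auto
  finally show ?thesis
    by simp
qed

lemma mod_double_add_mult:
  "((a::nat) + j * m) mod (2 * m) \<in> {a mod (2 * m), (a + m) mod (2 * m)}"
proof (cases "even j")
  case True
  then obtain q where "j = 2 * q"
    by blast
  then have "a + j * m = a + q * (2 * m)"
    by simp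
  then show ?thesis
    by (metis insertI1 mod_mult_self1)
next
  case False
  then obtain q where "j = 2 * q + 1"
    by (blast elim: oddE)
  then have "a + j * m = (a + m) + q * (2 * m)"
    by (simp add: algebra_simps)
  then show ?thesis
    by (metis insertI1 insertI2 mod_mult_self1)
qed

lemma div_double_add_mult:
  assumes "0 < (m::nat)"
  shows "(a + t * m) div (2 * m) \<in> {a div (2 * m) + t div 2, a div (2 * m) + (t - t div 2)}"
proof -
  define u e where "u = t div 2" and "e = t mod 2"
  then have t: "t = 2 * u + e" "e = 0 \<or> e = 1"
    by auto
  then have "(a + t * m) div (2 * m) = ((a + e * m) + u * (2 * m)) div (2 * m)"
    by (simp add: algebra_simps)
  then have split: "(a + t * m) div (2 * m) = (a + e * m) div (2 * m) + u"
    using assms by simp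
  show ?thesis
  proof (cases "e = 0")
    case True
    then show ?thesis
      using split u_def by simp
  next
    case False
    have "a div (2 * m) \<le> (a + m) div (2 * m)" "(a + m) div (2 * m) \<le> (a + 1 * (2 * m)) div (2 * m)"
      by (simp_all add: div_le_mono)
    then have "(a + m) div (2 * m) \<in> {a div (2 * m), a div (2 * m) + 1}"
      using assms by auto
    moreover have "e = 1" "t - t div 2 = u + 1"
      using t False u_def by auto
    ultimately show ?thesis
      using split u_def by auto
  qed
qed

section \<open>Two-dimensional strings given by entry functions\<close>

definition hcat_fun :: "(nat \<Rightarrow> nat \<Rightarrow> sym) \<Rightarrow> (nat \<Rightarrow> nat \<Rightarrow> sym) \<Rightarrow> nat \<Rightarrow> nat \<Rightarrow> nat \<Rightarrow> sym" where
  "hcat_fun f g w = (\<lambda>r c. if c < w then f r c else g r (c - w))"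

definition vcat_fun :: "(nat \<Rightarrow> nat \<Rightarrow> sym) \<Rightarrow> (nat \<Rightarrow> nat \<Rightarrow> sym) \<Rightarrow> nat \<Rightarrow> nat \<Rightarrow> nat \<Rightarrow> sym" where
  "vcat_fun f g h = (\<lambda>r c. if r < h then f r c else g (r - h) c)"

lemma length_mk2 [simp]: "length (mk2 h w f) = h"
  by (simp add: mk2_def)

lemma nth_mk2 [simp]: "r < h \<Longrightarrow> mk2 h w f ! r = map (f r) [0..<w]"
  by (simp add: mk2_def)

lemma width2_mk2 [simp]: "0 < h \<Longrightarrow> width2 (mk2 h w f) = w"
  by (simp add: mk2_def width2_def hd_map upt_conv_Cons)

lemma length_concat_mk2 [simp]: "length (concat (mk2 h w f)) = h * w"
  by (simp add: mk2_def length_concat comp_def sum_list_triv)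

lemma concat_mk2_eq_Nil_iff: "concat (mk2 h w f) = [] \<longleftrightarrow> h = 0 \<or> w = 0"
  by (metis length_concat_mk2 length_0_conv mult_is_0)

lemma mk2_cong: "(\<And>r c. r < h \<Longrightarrow> c < w \<Longrightarrow> f r c = g r c) \<Longrightarrow> mk2 h w f = mk2 h w g"
  by (simp add: mk2_def)

lemma map2_append_mk2: "map2 (@) (mk2 h w1 f) (mk2 h w2 g) = mk2 h (w1 + w2) (hcat_fun f g w1)"
  by (rule nth_equalityI) (auto intro!: nth_equalityI simp: hcat_fun_def nth_append)

lemma append_mk2: "mk2 h1 w f @ mk2 h2 w g = mk2 (h1 + h2) w (vcat_fun f g h1)"
  by (rule nth_equalityI) (auto simp: vcat_fun_def nth_append)

lemma length_concat_map2_append: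
  "length t = length u \<Longrightarrow> length (concat (map2 (@) t u)) = length (concat t) + length (concat u)"
  by (induction t u rule: list_induct2) auto

section \<open>Sets of 2D strings closed under decomposition\<close>

text \<open>The two parts of a decomposition are required to be nonempty, so that they are strictly
  smaller; this makes the SLP built from a set of decomposable strings acyclic.\<close>

definition decomposable :: "str2 set \<Rightarrow> str2 \<Rightarrow> bool" where
  "decomposable S s \<longleftrightarrow> (\<exists>a. s = [[a]]) \<or>
     (\<exists>t\<in>S. \<exists>u\<in>S. concat t \<noteq> [] \<and> concat u \<noteq> [] \<and>
        (length t = length u \<and> s = map2 (@) t u \<or> width2 t = width2 u \<and> s = t @ u))"

lemma decomposable_single: "decomposable S (mk2 1 1 f)"
  by (simp add: decomposable_def mk2_def)

lemma decomposable_hcat: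
  assumes "mk2 h w1 f \<in> S" "mk2 h w2 g \<in> S" "w = w1 + w2" "0 < h" "0 < w1" "0 < w2"
    and "\<And>r c. r < h \<Longrightarrow> c < w \<Longrightarrow> F r c = hcat_fun f g w1 r c"
  shows "decomposable S (mk2 h w F)"
proof -
  have "mk2 h w F = map2 (@) (mk2 h w1 f) (mk2 h w2 g)"
    unfolding map2_append_mk2 assms(3) using assms(3,7) by (intro mk2_cong) auto
  moreover have "concat (mk2 h w1 f) \<noteq> []" "concat (mk2 h w2 g) \<noteq> []"
    unfolding concat_mk2_eq_Nil_iff using assms(4-6) by simp_all
  ultimately show ?thesis
    using assms(1,2) unfolding decomposable_def by (metis length_mk2)
qed

lemma decomposable_vcat:
  assumes "mk2 h1 w f \<in> S" "mk2 h2 w g \<in> S" "h = h1 + h2" "0 < h1" "0 < h2" "0 < w"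
    and "\<And>r c. r < h \<Longrightarrow> c < w \<Longrightarrow> F r c = vcat_fun f g h1 r c"
  shows "decomposable S (mk2 h w F)"
proof -
  have "mk2 h w F = mk2 h1 w f @ mk2 h2 w g"
    unfolding append_mk2 assms(3) using assms(3,7) by (intro mk2_cong) auto
  moreover have "concat (mk2 h1 w f) \<noteq> []" "concat (mk2 h2 w g) \<noteq> []"
    unfolding concat_mk2_eq_Nil_iff using assms(4-6) by simp_all
  moreover have "width2 (mk2 h1 w f) = width2 (mk2 h2 w g)"
    using assms(4,5) by simp
  ultimately show ?thesis
    using assms(1,2) unfolding decomposable_def by blast
qed

definition production_for :: "str2 set \<Rightarrow> (str2 \<Rightarrow> nat) \<Rightarrow> str2 \<Rightarrow> rhs \<Rightarrow> bool" where
  "production_for S e s \<rho> \<longleftrightarrow> (\<exists>a. s = [[a]] \<and> \<rho> = Chr a) \<or>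
     (\<exists>t\<in>S. \<exists>u\<in>S. concat t \<noteq> [] \<and> concat u \<noteq> [] \<and>
        (length t = length u \<and> s = map2 (@) t u \<and> \<rho> = HCat (e t) (e u) \<or>
         width2 t = width2 u \<and> s = t @ u \<and> \<rho> = VCat (e t) (e u)))"

lemma decomposable_imp_production_for: "decomposable S s \<Longrightarrow> \<exists>\<rho>. production_for S e s \<rho>"
  unfolding decomposable_def production_for_def by blast

lemma production_for_children:
  assumes "production_for S e s \<rho>"
  shows "children \<rho> \<subseteq> e ` {t \<in> S. length (concat t) < length (concat s)}"
  using assms unfolding production_for_def
  by (auto intro!: imageI simp: length_concat_map2_append simp del: concat_eq_Nil_conv)

lemma derives_if_production_for:
  assumes nts: "e ` S \<subseteq> nts G" and prod: "\<And>s. s \<in> S \<Longrightarrow> production_for S e s (prod G (e s))"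
    and "s \<in> S"
  shows "derives G (e s) s"
  using \<open>s \<in> S\<close>
proof (induction s rule: measure_induct_rule[of "\<lambda>s. length (concat s)"])
  case (less s)
  have in_nts: "e s \<in> nts G"
    using less.prems nts by blast
  from prod[OF less.prems] show ?case
    unfolding production_for_def
  proof (elim disjE exE bexE conjE)
    fix a assume "s = [[a]]" "prod G (e s) = Chr a"
    then show ?thesis using derives.chr[OF in_nts] by simp
  next
    fix t u assume tu: "t \<in> S" "u \<in> S" "concat t \<noteq> []" "concat u \<noteq> []"
      "length t = length u" "s = map2 (@) t u" "prod G (e s) = HCat (e t) (e u)"
    then show ?thesis
      using derives.hcat[OF in_nts tu(7)] less.IH[of t] less.IH[of u]
      by (simp add: length_concat_map2_append)
  next
    fix t u assume tu: "t \<in> S" "u \<in> S" "concat t \<noteq> []" "concat u \<noteq> []"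
      "width2 t = width2 u" "s = t @ u" "prod G (e s) = VCat (e t) (e u)"
    then show ?thesis
      using derives.vcat[OF in_nts tu(7)] less.IH[of t] less.IH[of u] by simp
  qed
qed

lemma is_slp2_if_production_for:
  assumes "finite S" "inj_on e S" and nts: "nts G = e ` S" and "start G \<in> nts G"
    and prod: "\<And>s. s \<in> S \<Longrightarrow> production_for S e s (prod G (e s))"
  shows "is_slp2 G"
proof -
  define str where "str = the_inv_into S e"
  have str_e: "str (e s) = s" if "s \<in> S" for s
    using assms(2) that unfolding str_def by (rule the_inv_into_f_f)
  have child: "Y \<in> nts G \<and> length (concat (str Y)) < length (concat (str X))"
    if X: "X \<in> nts G" and Y: "Y \<in> children (prod G X)" for X Y
  proof -
    obtain s where s: "s \<in> S" "X = e s"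
      using X unfolding nts by blast
    then obtain t where "t \<in> S" "Y = e t" "length (concat t) < length (concat s)"
      using production_for_children[OF prod[OF s(1)]] Y unfolding s(2) by blast
    then show ?thesis
      using s by (simp add: nts str_e)
  qed
  have descending:
    "{(X, Y). X \<in> nts G \<and> Y \<in> children (prod G X)}\<inverse> \<subseteq> measure (\<lambda>X. length (concat (str X)))"
  proof (rule subrelI)
    fix Y X assume "(Y, X) \<in> {(X, Y). X \<in> nts G \<and> Y \<in> children (prod G X)}\<inverse>"
    then show "(Y, X) \<in> measure (\<lambda>X. length (concat (str X)))"
      using child[of X Y] by simp
  qed
  show ?thesis
    unfolding is_slp2_def
  proof (intro conjI ballI)
    show "finite (nts G)"
      using assms(1) by (simp add: nts)
    show "children (prod G X) \<subseteq> nts G" if "X \<in> nts G" for X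
      using child[OF that] by blast
    show "\<exists>s. derives G X s" if "X \<in> nts G" for X
      using that derives_if_production_for[of e S G, OF _ prod] by (auto simp: nts)
    show "acyclic {(X, Y). X \<in> nts G \<and> Y \<in> children (prod G X)}"
      using acyclic_converse wf_acyclic[OF wf_subset[OF wf_measure descending]] by blast
  qed (fact assms(4))
qed

lemma slp_of_decomposable_set:
  assumes "finite S" "S \<noteq> {}" and dec: "\<forall>s\<in>S. decomposable S s"
  shows "\<exists>G. is_slp2 G \<and> card (nts G) = card S \<and> (\<forall>s\<in>S. \<exists>X\<in>nts G. derives G X s)"
proof -
  obtain e where e: "bij_betw e S {0..<card S}"
    using ex_bij_betw_finite_nat[OF assms(1)] ..
  then have inj: "inj_on e S"
    by (rule bij_betw_imp_inj_on)
  define G where "G = \<lparr>nts = e ` S, start = e (SOME s. s \<in> S),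
    prod = (\<lambda>X. SOME \<rho>. production_for S e (the_inv_into S e X) \<rho>)\<rparr>"
  have nts: "nts G = e ` S"
    by (simp add: G_def)
  have prod: "production_for S e s (prod G (e s))" if "s \<in> S" for s
    using decomposable_imp_production_for[of S s e] dec that inj
    by (simp add: G_def the_inv_into_f_f someI_ex)
  have "is_slp2 G"
    using assms(1,2) inj prod by (intro is_slp2_if_production_for[OF _ inj nts]) (simp_all add: G_def some_in_eq)
  moreover have "card (nts G) = card S"
    using inj by (simp add: nts card_image)
  moreover have "\<forall>s\<in>S. \<exists>X\<in>nts G. derives G X s"
    using derives_if_production_for[of e S G, OF _ prod] by (auto simp: nts)
  ultimately show ?thesis
    by blast
qed

section \<open>Families of repetitions closed under halving\<close>

text \<open>If \<open>x < 2^K\<close>, both halves \<open>\<lfloor>y/2\<rfloor>\<close> and \<open>\<lceil>y/2\<rceil>\<close> of a member \<open>y \<ge> 2\<close> of \<open>halvings K x\<close>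
  are members again, so a string repeated \<open>x\<close> times is built from \<open>O(K)\<close> shorter repetitions.\<close>

definition halvings :: "nat \<Rightarrow> nat \<Rightarrow> nat set" where
  "halvings K x = (\<lambda>j. x div 2 ^ j) ` {..K} \<union> (\<lambda>j. x div 2 ^ j + 1) ` {..K}"

lemma finite_halvings [simp]: "finite (halvings K x)"
  by (simp add: halvings_def)

lemma card_halvings_le: "card (halvings K x) \<le> 2 * (K + 1)"
proof -
  have "card (halvings K x) \<le> card ((\<lambda>j. x div 2 ^ j) ` {..K}) + card ((\<lambda>j. x div 2 ^ j + 1) ` {..K})"
    unfolding halvings_def by (rule card_Un_le)
  also have "\<dots> \<le> card {..K} + card {..K}"
    by (intro add_mono card_image_le) auto
  finally show ?thesis
    by simp
qed

lemma self_in_halvings: "x \<in> halvings K x"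
  unfolding halvings_def by (auto intro: image_eqI[of _ _ 0])

lemma halves_in_halvings:
  assumes "1 \<le> K"
  shows "x div 2 \<in> halvings K x" "x - x div 2 \<in> halvings K x"
proof -
  have "x - x div 2 \<in> {x div 2 ^ 1, x div 2 ^ 1 + 1}"
    by auto
  then show "x div 2 \<in> halvings K x" "x - x div 2 \<in> halvings K x"
    using assms unfolding halvings_def by (auto intro: image_eqI[of _ _ 1])
qed

lemma halvings_closed:
  assumes "x < 2 ^ K" "y \<in> halvings K x" "2 \<le> y"
  shows "y div 2 \<in> halvings K x \<and> y - y div 2 \<in> halvings K x"
proof -
  obtain j where j: "j \<le> K" "y = x div 2 ^ j \<or> y = x div 2 ^ j + 1"
    using assms(2) unfolding halvings_def by blast
  have "j \<noteq> K"
    using assms j by (auto simp: div_less)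
  define q where "q = x div 2 ^ Suc j"
  have "x div 2 ^ j = 2 * q + x div 2 ^ j mod 2"
    unfolding q_def power_Suc2 div_mult2_eq by (rule mult_div_mod_eq[symmetric])
  then have "y div 2 \<in> {q, q + 1} \<and> y - y div 2 \<in> {q, q + 1}"
    using j(2) by auto
  moreover have "{q, q + 1} \<subseteq> halvings K x"
    unfolding halvings_def q_def using j(1) \<open>j \<noteq> K\<close> by (auto intro: image_eqI[of _ _ "Suc j"])
  ultimately show ?thesis
    by blast
qed

definition halving_family :: "(nat \<Rightarrow> str2) \<Rightarrow> nat \<Rightarrow> nat set \<Rightarrow> str2 set" where
  "halving_family F K X = F ` ((\<Union>x\<in>X. halvings K x) - {0})"

lemma finite_halving_family [simp]: "finite X \<Longrightarrow> finite (halving_family F K X)"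
  by (simp add: halving_family_def)

lemma card_halving_family_le:
  assumes "finite X" "card X \<le> c"
  shows "card (halving_family F K X) \<le> 2 * (K + 1) * c"
proof -
  have "card (halving_family F K X) \<le> card (\<Union>x\<in>X. halvings K x)"
    unfolding halving_family_def using assms(1)
    by (intro order.trans[OF card_image_le] card_mono) auto
  also have "\<dots> \<le> (\<Sum>x\<in>X. card (halvings K x))"
    using assms(1) by (rule card_UN_le)
  also have "\<dots> \<le> (\<Sum>x\<in>X. 2 * (K + 1))"
    by (intro sum_mono card_halvings_le)
  also have "\<dots> = 2 * (K + 1) * card X"
    by simp
  also have "\<dots> \<le> 2 * (K + 1) * c"
    using assms(2) by (rule mult_le_mono2)
  finally show ?thesis .
qed

definition decomposes_additively :: "str2 set \<Rightarrow> (nat \<Rightarrow> str2) \<Rightarrow> bool" where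
  "decomposes_additively S F \<longleftrightarrow>
     (\<forall>a b. 0 < a \<longrightarrow> 0 < b \<longrightarrow> F a \<in> S \<longrightarrow> F b \<in> S \<longrightarrow> decomposable S (F (a + b)))"

lemma seed_in_halving_family: "x \<in> X \<Longrightarrow> 0 < x \<Longrightarrow> F x \<in> halving_family F K X"
  unfolding halving_family_def using self_in_halvings by blast

lemma decomposable_halving_family:
  assumes "decomposes_additively S F" and one: "decomposable S (F 1)"
    and bound: "\<forall>x\<in>X. x < 2 ^ K" and sub: "halving_family F K X \<subseteq> S"
    and s: "s \<in> halving_family F K X"
  shows "decomposable S s"
proof -
  note add = \<open>decomposes_additively S F\<close>[unfolded decomposes_additively_def, rule_format]
  obtain x y where xy: "x \<in> X" "y \<in> halvings K x" "y \<noteq> 0" "s = F y"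
    using s unfolding halving_family_def by blast
  show ?thesis
  proof (cases "y = 1")
    case True
    then show ?thesis using one xy by simp
  next
    case False
    then have halves: "y div 2 \<in> halvings K x \<and> y - y div 2 \<in> halvings K x"
      using halvings_closed[OF bound[rule_format, OF xy(1)] xy(2)] xy(3) by simp
    have pos: "0 < y div 2" "0 < y - y div 2"
      using xy(3) False by auto
    then have "{y div 2, y - y div 2} \<subseteq> (\<Union>x\<in>X. halvings K x) - {0}"
      using halves xy(1) by auto
    then have "F ` {y div 2, y - y div 2} \<subseteq> S"
      using sub unfolding halving_family_def by (metis image_mono order_trans)
    then have "decomposable S (F (y div 2 + (y - y div 2)))"
      using pos by (intro add) auto
    then show ?thesis
      using xy(4) by simp
  qed
qed

lemma decomposable_chain:
  assumes add: "decomposes_additively S F" and one: "decomposable S (F 1)"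
    and bound: "\<forall>x\<in>X. x < 2 ^ K" and "xs 0 \<in> X" "t \<in> X"
    and step: "\<And>i. i < k \<Longrightarrow> \<exists>d\<in>halvings K t. xs (Suc i) = xs i + d"
    and sub: "halving_family F K X \<union> F ` {xs i |i. i \<le> k \<and> 0 < xs i} \<subseteq> S"
    and "i \<le> k" "0 < xs i"
  shows "decomposable S (F (xs i))"
proof -
  have family: "decomposable S (F y)" if "x \<in> X" "y \<in> halvings K x" "0 < y" for x y
    using that sub
    by (intro decomposable_halving_family[OF add one bound]) (auto simp: halving_family_def)
  show ?thesis
    using \<open>i \<le> k\<close> \<open>0 < xs i\<close>
  proof (induction i)
    case 0
    then show ?case
      using family[OF \<open>xs 0 \<in> X\<close> self_in_halvings] by simp
  next
    case (Suc i)
    obtain d where d: "d \<in> halvings K t" "xs (Suc i) = xs i + d"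
      using step Suc.prems(1) by (meson Suc_le_lessD)
    consider "xs i = 0" | "d = 0" | "0 < xs i" "0 < d"
      by blast
    then show ?case
    proof cases
      case 1
      then show ?thesis using family[OF \<open>t \<in> X\<close> d(1)] d(2) Suc.prems(2) by simp
    next
      case 2
      then show ?thesis using Suc d(2) by simp
    next
      case 3
      have "xs i \<in> {xs i |i. i \<le> k \<and> 0 < xs i}" "d \<in> (\<Union>x\<in>X. halvings K x) - {0}"
        using Suc.prems(1) 3 d(1) \<open>t \<in> X\<close> by auto
      then have "F (xs i) \<in> S" "F d \<in> S"
        using sub unfolding halving_family_def by auto
      then show ?thesis
        using add[unfolded decomposes_additively_def] 3 d(2) by simp
    qed
  qed
qed

definition zeros :: "nat \<Rightarrow> nat \<Rightarrow> str2" where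
  "zeros h w = mk2 h w (\<lambda>_ _. S0)"

definition vrep :: "nat \<Rightarrow> nat \<Rightarrow> (nat \<Rightarrow> nat \<Rightarrow> sym) \<Rightarrow> nat \<Rightarrow> str2" where
  "vrep h w f y = mk2 (y * h) w (\<lambda>r c. f (r mod h) c)"

lemma decomposable_zeros_1_1: "decomposable S (zeros 1 1)"
  unfolding zeros_def by (rule decomposable_single)

lemma decomposes_additively_zeros_width:
  assumes "0 < h"
  shows "decomposes_additively S (zeros h)"
  unfolding decomposes_additively_def
proof (intro allI impI)
  fix a b assume "0 < a" "0 < b" "zeros h a \<in> S" "zeros h b \<in> S"
  then show "decomposable S (zeros h (a + b))"
    using assms unfolding zeros_def by (intro decomposable_hcat[of h a _ S b]) (auto simp: hcat_fun_def)
qed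

lemma decomposes_additively_zeros_height:
  assumes "0 < w"
  shows "decomposes_additively S (\<lambda>x. zeros x w)"
  unfolding decomposes_additively_def
proof (intro allI impI)
  fix a b assume "0 < a" "0 < b" "zeros a w \<in> S" "zeros b w \<in> S"
  then show "decomposable S (zeros (a + b) w)"
    using assms unfolding zeros_def by (intro decomposable_vcat[of a w _ S b]) (auto simp: vcat_fun_def)
qed

lemma vrep_1: "0 < h \<Longrightarrow> vrep h w f 1 = mk2 h w f"
  unfolding vrep_def by (auto intro: mk2_cong)

lemma decomposes_additively_vrep:
  assumes "0 < h" "0 < w"
  shows "decomposes_additively S (vrep h w f)"
  unfolding decomposes_additively_def
proof (intro allI impI)
  fix a b assume ab: "0 < a" "0 < b" "vrep h w f a \<in> S" "vrep h w f b \<in> S"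
  show "decomposable S (vrep h w f (a + b))"
    unfolding vrep_def
  proof (rule decomposable_vcat[OF ab(3,4)[unfolded vrep_def]])
    fix r c assume "r < (a + b) * h"
    show "f (r mod h) c = vcat_fun (\<lambda>r. f (r mod h)) (\<lambda>r. f (r mod h)) (a * h) r c"
    proof (cases "r < a * h")
      case False
      then obtain r' where "r = a * h + r'"
        using le_Suc_ex not_less by blast
      then show ?thesis by (simp add: vcat_fun_def)
    qed (simp add: vcat_fun_def)
  qed (use assms ab in \<open>simp_all add: algebra_simps\<close>)
qed

section \<open>The blocks \<open>Bin\<close> and \<open>ShiftBin\<close> by doubling\<close>

definition const_col :: "sym \<Rightarrow> nat \<Rightarrow> str2" where
  "const_col a j = mk2 (2 ^ j) 1 (\<lambda>_ _. a)"

text \<open>\<open>bin_suffix j\<close> is \<open>Bin\<close> with \<open>2^j\<close> rows without its first column.\<close>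

definition bin_suffix_entry :: "nat \<Rightarrow> nat \<Rightarrow> nat \<Rightarrow> sym" where
  "bin_suffix_entry j r c = bin_entry j r (c + 1)"

definition bin_suffix :: "nat \<Rightarrow> str2" where
  "bin_suffix j = mk2 (2 ^ j) (Suc j) (bin_suffix_entry j)"

definition bit_prefixed :: "sym \<Rightarrow> nat \<Rightarrow> str2" where
  "bit_prefixed a j = mk2 (2 ^ j) (Suc (Suc j)) (hcat_fun (\<lambda>_ _. a) (bin_suffix_entry j) 1)"

definition bin_family :: "nat \<Rightarrow> str2 set" where
  "bin_family n = (\<Union>a\<in>{S0, S1, SD}. const_col a ` {..n}) \<union> bin_suffix ` {..n}
     \<union> (\<Union>a\<in>{S0, S1}. bit_prefixed a ` {..n})"

lemma finite_bin_family [simp]: "finite (bin_family n)"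
  by (simp add: bin_family_def)

lemma card_bin_family_le: "card (bin_family n) \<le> 6 * (n + 1)"
proof -
  have "card (bin_family n) \<le> 3 * (n + 1) + (n + 1) + 2 * (n + 1)"
    unfolding bin_family_def
    using card_UN_image_atMost_le[of "{S0, S1, SD}" const_col n]
      card_UN_image_atMost_le[of "{S0, S1}" bit_prefixed n] card_image_atMost_le[of bin_suffix n]
    by (intro order.trans[OF card_Un_le] add_mono) auto
  then show ?thesis
    by simp
qed

lemma nth_bit_two_pow_add:
  assumes "e < j"
  shows "((2::nat) ^ j + r) div 2 ^ e mod 2 = r div 2 ^ e mod 2"
proof -
  have "(2::nat) ^ j = 2 * 2 ^ (j - Suc e) * 2 ^ e"
    using assms by (simp flip: power_add power_Suc)
  then show ?thesis
    by simp
qed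

text \<open>The rows of \<open>Bin\<close> with \<open>2^(j+1)\<close> rows are those of \<open>Bin\<close> with \<open>2^j\<close> rows with a leading
  bit \<open>0\<close>, followed by the same rows with a leading bit \<open>1\<close>.\<close>

lemma bin_suffix_entry_Suc:
  assumes "r < 2 ^ Suc j" "c < Suc (Suc j)"
  shows "bin_suffix_entry (Suc j) r c = vcat_fun (hcat_fun (\<lambda>_ _. S0) (bin_suffix_entry j) 1)
    (hcat_fun (\<lambda>_ _. S1) (bin_suffix_entry j) 1) (2 ^ j) r c"
proof (cases "r < 2 ^ j")
  case True
  then show ?thesis
    by (cases c) (auto simp: bin_suffix_entry_def vcat_fun_def hcat_fun_def bin_entry_def)
next
  case False
  then obtain r' where r': "r = 2 ^ j + r'" "r' < 2 ^ j"
    using assms(1) by (metis add_less_imp_less_left le_Suc_ex mult_2 not_less power_Suc)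
  show ?thesis
  proof (cases c)
    case 0
    then show ?thesis
      using r' by (simp add: bin_suffix_entry_def vcat_fun_def hcat_fun_def bin_entry_def)
  next
    case (Suc c')
    then have "c' = j \<or> j - Suc c' < j"
      using assms(2) by auto
    then show ?thesis
      using Suc r' nth_bit_two_pow_add[of "j - Suc c'" j r'] assms(2)
      by (auto simp: bin_suffix_entry_def vcat_fun_def hcat_fun_def bin_entry_def)
  qed
qed

lemma decomposable_bin_family:
  assumes sub: "bin_family n \<subseteq> S" and s: "s \<in> bin_family n"
  shows "decomposable S s"
proof -
  have col: "decomposable S (const_col a j)" if "j \<le> n" "a \<in> {S0, S1, SD}" for a j
    using that
  proof (induction j)
    case 0
    then show ?case using decomposable_single[of S "\<lambda>_ _. a"] by (simp add: const_col_def)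
  next
    case (Suc j)
    then have "const_col a j \<in> S"
      using sub unfolding bin_family_def by auto
    then have half: "mk2 (2 ^ j) 1 (\<lambda>_ _. a) \<in> S"
      by (simp only: const_col_def)
    show ?case
      unfolding const_col_def by (rule decomposable_vcat[OF half half]) (auto simp: vcat_fun_def)
  qed
  have prefixed: "decomposable S (bit_prefixed a j)" if "j \<le> n" "a \<in> {S0, S1}" for a j
  proof -
    have "mk2 (2 ^ j) 1 (\<lambda>_ _. a) \<in> S" "mk2 (2 ^ j) (Suc j) (bin_suffix_entry j) \<in> S"
      using that sub unfolding bin_family_def const_col_def bin_suffix_def by auto
    then show ?thesis
      unfolding bit_prefixed_def by (rule decomposable_hcat) auto
  qed
  have suffix: "decomposable S (bin_suffix j)" if "j \<le> n" for j
  proof (cases j)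
    case 0
    then show ?thesis using decomposable_single[of S "bin_suffix_entry 0"] by (simp add: bin_suffix_def)
  next
    case (Suc j')
    then have "bit_prefixed S0 j' \<in> S" "bit_prefixed S1 j' \<in> S"
      using that sub unfolding bin_family_def by auto
    then show ?thesis
      unfolding bin_suffix_def bit_prefixed_def Suc
      by (rule decomposable_vcat) (auto simp: bin_suffix_entry_Suc)
  qed
  show ?thesis
    using s col prefixed suffix unfolding bin_family_def by blast
qed

text \<open>\<open>shiftbin_prefix n j\<close> consists of the first \<open>2^j\<close> diagonal copies of \<open>Bin\<close> in \<open>ShiftBin\<close>
  (for \<open>M' = 2^n\<close>), which occupy its first \<open>2^j - 1 + 2^n\<close> rows.\<close>

definition shiftbin_prefix :: "nat \<Rightarrow> nat \<Rightarrow> str2" where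
  "shiftbin_prefix n j = mk2 (2 ^ j - 1 + 2 ^ n) (2 ^ j * (n + 2)) (shiftbin_entry n)"

definition prefix_above_zeros :: "nat \<Rightarrow> nat \<Rightarrow> str2" where
  "prefix_above_zeros n j = mk2 (2 ^ Suc j - 1 + 2 ^ n) (2 ^ j * (n + 2))
     (vcat_fun (shiftbin_entry n) (\<lambda>_ _. S0) (2 ^ j - 1 + 2 ^ n))"

definition zeros_above_prefix :: "nat \<Rightarrow> nat \<Rightarrow> str2" where
  "zeros_above_prefix n j = mk2 (2 ^ Suc j - 1 + 2 ^ n) (2 ^ j * (n + 2))
     (vcat_fun (\<lambda>_ _. S0) (shiftbin_entry n) (2 ^ j))"

definition ShiftBin :: "nat \<Rightarrow> str2" where
  "ShiftBin n = mk2 (2 * 2 ^ n) (2 ^ n * (n + 2)) (shiftbin_entry n)"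

definition shiftbin_family :: "nat \<Rightarrow> str2 set" where
  "shiftbin_family n = shiftbin_prefix n ` {..n} \<union> prefix_above_zeros n ` {..n}
     \<union> zeros_above_prefix n ` {..n} \<union> {ShiftBin n}"

definition zero_squares :: "nat \<Rightarrow> str2 set" where
  "zero_squares n = (\<lambda>j. zeros (2 ^ j) (2 ^ j * (n + 2))) ` {..n}
     \<union> (\<lambda>j. zeros (2 ^ j) (2 ^ Suc j * (n + 2))) ` {..n}"

lemma finite_shiftbin_family [simp]: "finite (shiftbin_family n)"
  by (simp add: shiftbin_family_def)

lemma finite_zero_squares [simp]: "finite (zero_squares n)"
  by (simp add: zero_squares_def)

lemma card_shiftbin_family_le: "card (shiftbin_family n) \<le> 3 * (n + 1) + 1"
proof -
  have "card (shiftbin_family n) \<le> (n + 1) + (n + 1) + (n + 1) + 1"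
    unfolding shiftbin_family_def
    by (intro order.trans[OF card_Un_le] add_mono card_image_atMost_le) auto
  then show ?thesis
    by simp
qed

lemma card_zero_squares_le: "card (zero_squares n) \<le> 2 * (n + 1)"
proof -
  have "card (zero_squares n) \<le> (n + 1) + (n + 1)"
    unfolding zero_squares_def
    by (intro order.trans[OF card_Un_le] add_mono card_image_atMost_le)
  then show ?thesis
    by simp
qed

lemma shiftbin_prefix_0: "shiftbin_prefix n 0 = mk2 (2 ^ n) (n + 2) (bin_entry n)"
  unfolding shiftbin_prefix_def by (auto intro!: mk2_cong simp: shiftbin_entry_def)

lemma div_mult_add_self: "(s * (n + 2) + c) div (n + 2) = s + c div (n + 2::nat)"
  by (rule div_mult_self3) simp

lemma shiftbin_entry_below:
  assumes "c < s * (n + 2)" "s - 1 + 2 ^ n \<le> r" "0 < s"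
  shows "shiftbin_entry n r c = S0"
proof -
  have "c div (n + 2) < s"
    using assms(1) by (simp add: less_mult_imp_div_less)
  then have "\<not> r < c div (n + 2) + 2 ^ n"
    using assms(2,3) by linarith
  then show ?thesis
    unfolding shiftbin_entry_def Let_def by simp
qed

lemma shiftbin_entry_above: "r < s \<Longrightarrow> shiftbin_entry n r (s * (n + 2) + c) = S0"
  unfolding shiftbin_entry_def Let_def div_mult_add_self by simp

lemma shiftbin_entry_shift: "shiftbin_entry n (s + r) (s * (n + 2) + c) = shiftbin_entry n r c"
  unfolding shiftbin_entry_def Let_def div_mult_add_self mod_mult_self3 by simp

text \<open>The first \<open>2^(j+1)\<close> diagonal copies of \<open>Bin\<close> are two copies of the first \<open>2^j\<close>, placed
  side by side with the right one shifted down by \<open>2^j\<close> rows.\<close>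

lemma shiftbin_prefix_Suc_entry:
  assumes "r < 2 ^ Suc j - 1 + 2 ^ n" "c < 2 ^ Suc j * (n + 2)"
  shows "shiftbin_entry n r c = hcat_fun (vcat_fun (shiftbin_entry n) (\<lambda>_ _. S0) (2 ^ j - 1 + 2 ^ n))
    (vcat_fun (\<lambda>_ _. S0) (shiftbin_entry n) (2 ^ j)) (2 ^ j * (n + 2)) r c"
proof (cases "c < 2 ^ j * (n + 2)")
  case True
  then show ?thesis
    using shiftbin_entry_below[of c "2 ^ j" n r] by (simp add: hcat_fun_def vcat_fun_def)
next
  case False
  then obtain c' where c': "c = 2 ^ j * (n + 2) + c'"
    using le_Suc_ex not_less by blast
  show ?thesis
  proof (cases "r < 2 ^ j")
    case True
    then show ?thesis
      using c' shiftbin_entry_above[of r "2 ^ j" n c'] by (simp add: hcat_fun_def vcat_fun_def)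
  next
    case False
    then obtain r' where "r = 2 ^ j + r'"
      using le_Suc_ex not_less by blast
    then show ?thesis
      using c' shiftbin_entry_shift[of n "2 ^ j" r' c'] by (simp add: hcat_fun_def vcat_fun_def)
  qed
qed

lemma decomposable_zero_squares:
  assumes sub: "zero_squares n \<subseteq> S" and row: "decomposable S (zeros 1 (n + 2))"
    and s: "s \<in> zero_squares n"
  shows "decomposable S s"
proof -
  have square_in: "mk2 (2 ^ j) (2 ^ j * (n + 2)) (\<lambda>_ _. S0) \<in> S"
    and rectangle_in: "mk2 (2 ^ j) (2 ^ Suc j * (n + 2)) (\<lambda>_ _. S0) \<in> S" if "j \<le> n" for j
    using sub that unfolding zero_squares_def zeros_def by auto
  have rectangle: "decomposable S (zeros (2 ^ j) (2 ^ Suc j * (n + 2)))" if "j \<le> n" for j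
    unfolding zeros_def
    by (rule decomposable_hcat[OF square_in[OF that] square_in[OF that]]) (auto simp: hcat_fun_def)
  have square: "decomposable S (zeros (2 ^ j) (2 ^ j * (n + 2)))" if "j \<le> n" for j
  proof (cases j)
    case 0
    then show ?thesis using row by simp
  next
    case (Suc j')
    then have half: "mk2 (2 ^ j') (2 ^ Suc j' * (n + 2)) (\<lambda>_ _. S0) \<in> S"
      using rectangle_in that by simp
    show ?thesis
      unfolding zeros_def Suc
      by (rule decomposable_vcat[OF half half]) (auto simp: vcat_fun_def)
  qed
  show ?thesis
    using s rectangle square unfolding zero_squares_def by blast
qed

lemma decomposable_shiftbin_family:
  assumes sub: "shiftbin_family n \<subseteq> S" "zero_squares n \<subseteq> S" "bin_family n \<subseteq> S"
    and row: "zeros 1 (2 ^ n * (n + 2)) \<in> S"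
    and s: "s \<in> shiftbin_family n"
  shows "decomposable S s"
proof -
  have prefix_in: "mk2 (2 ^ j - 1 + 2 ^ n) (2 ^ j * (n + 2)) (shiftbin_entry n) \<in> S"
    and square_in: "mk2 (2 ^ j) (2 ^ j * (n + 2)) (\<lambda>_ _. S0) \<in> S" if "j \<le> n" for j
    using sub(1,2) that unfolding shiftbin_family_def zero_squares_def shiftbin_prefix_def zeros_def
    by auto
  have height_pos: "0 < 2 ^ j - 1 + (2::nat) ^ n" for j
    using zero_less_power[of "2::nat" n] by linarith
  have prefix: "decomposable S (shiftbin_prefix n j)" if "j \<le> n" for j
  proof (cases j)
    case 0
    have "const_col SD n \<in> S" "bin_suffix n \<in> S"
      using sub(3) unfolding bin_family_def by auto
    then show ?thesis
      unfolding 0 shiftbin_prefix_0 const_col_def bin_suffix_def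
      by (rule decomposable_hcat) (auto simp: hcat_fun_def bin_suffix_entry_def bin_entry_def)
  next
    case (Suc j')
    then have "prefix_above_zeros n j' \<in> S" "zeros_above_prefix n j' \<in> S"
      using that sub(1) unfolding shiftbin_family_def by auto
    note halves = this[unfolded prefix_above_zeros_def zeros_above_prefix_def]
    show ?thesis
      unfolding shiftbin_prefix_def Suc
      by (rule decomposable_hcat[OF halves])
        (use height_pos[of "Suc j'"] in \<open>auto simp: shiftbin_prefix_Suc_entry\<close>)
  qed
  have "decomposable S (prefix_above_zeros n j)" "decomposable S (zeros_above_prefix n j)"
    if "j \<le> n" for j
  proof -
    show "decomposable S (prefix_above_zeros n j)"
      unfolding prefix_above_zeros_def
      by (rule decomposable_vcat[OF prefix_in[OF that] square_in[OF that]]) (use height_pos[of j] in auto)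
    show "decomposable S (zeros_above_prefix n j)"
      unfolding zeros_above_prefix_def
      by (rule decomposable_vcat[OF square_in[OF that] prefix_in[OF that]]) (use height_pos[of j] in auto)
  qed
  moreover have "decomposable S (ShiftBin n)"
    unfolding ShiftBin_def
  proof (rule decomposable_vcat[OF prefix_in[OF order.refl] row[unfolded zeros_def]])
    fix r c :: nat assume "r < 2 * 2 ^ n" "c < 2 ^ n * (n + 2)"
    then show "shiftbin_entry n r c = vcat_fun (shiftbin_entry n) (\<lambda>_ _. S0) (2 ^ n - 1 + 2 ^ n) r c"
      using shiftbin_entry_below[of c "2 ^ n" n r] by (simp add: vcat_fun_def)
  qed (use height_pos[of n] in auto)
  ultimately show ?thesis
    using s prefix unfolding shiftbin_family_def by blast
qed

section \<open>Decomposing the strings \<open>Cstr x M\<close>\<close>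

definition padded_stack_entry :: "nat \<Rightarrow> (nat \<Rightarrow> nat \<Rightarrow> sym) \<Rightarrow> nat \<Rightarrow> nat \<Rightarrow> nat \<Rightarrow> sym" where
  "padded_stack_entry h f x r c = (if r div h < x div h then f (r mod h) c else S0)"

definition padded_stack :: "nat \<Rightarrow> nat \<Rightarrow> (nat \<Rightarrow> nat \<Rightarrow> sym) \<Rightarrow> nat \<Rightarrow> str2" where
  "padded_stack h w f x = mk2 x w (padded_stack_entry h f x)"

definition lowered_stack :: "nat \<Rightarrow> nat \<Rightarrow> nat \<Rightarrow> (nat \<Rightarrow> nat \<Rightarrow> sym) \<Rightarrow> nat \<Rightarrow> str2" where
  "lowered_stack m h w f x = mk2 x w (vcat_fun (\<lambda>_ _. S0) (padded_stack_entry h f (x - m)) m)"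

lemma decomposable_padded_stack:
  assumes "0 < h" "0 < w" "0 < x"
    and stack: "0 < x div h \<Longrightarrow> vrep h w f (x div h) \<in> S \<and> decomposable S (vrep h w f (x div h))"
    and rest: "0 < x mod h \<Longrightarrow> zeros (x mod h) w \<in> S \<and> decomposable S (zeros (x mod h) w)"
  shows "decomposable S (padded_stack h w f x)"
proof -
  have x: "x = x div h * h + x mod h"
    by simp
  have below: "r div h < x div h \<longleftrightarrow> r < x div h * h" for r
    using assms(1) by (simp add: less_mult_imp_div_less div_less_iff_less_mult)
  consider "x div h = 0" | "0 < x div h" "x mod h = 0" | "0 < x div h" "0 < x mod h"
    by blast
  then show ?thesis
  proof cases
    case 1
    then have "x mod h = x"
      using x by simp
    moreover have "padded_stack h w f x = zeros x w"
      unfolding padded_stack_def zeros_def padded_stack_entry_def 1 by simp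
    ultimately show ?thesis
      using rest assms(3) by simp
  next
    case 2
    then have x': "x div h * h = x"
      using x by simp
    have "padded_stack h w f x = vrep h w f (x div h)"
      unfolding padded_stack_def vrep_def x'
    proof (rule mk2_cong)
      fix r c assume "r < x"
      then show "padded_stack_entry h f x r c = f (r mod h) c"
        using below[of r] x' by (simp add: padded_stack_entry_def)
    qed
    then show ?thesis
      using stack 2 by simp
  next
    case 3
    show ?thesis
      unfolding padded_stack_def
    proof (rule decomposable_vcat[OF stack[THEN conjunct1, unfolded vrep_def]
          rest[THEN conjunct1, unfolded zeros_def]])
      fix r c assume "r < x"
      show "padded_stack_entry h f x r c = vcat_fun (\<lambda>r. f (r mod h)) (\<lambda>_ _. S0) (x div h * h) r c"
        unfolding padded_stack_entry_def vcat_fun_def using below[of r] by simp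
    qed (use assms(1,2) 3 in simp_all)
  qed
qed

lemma decomposable_lowered_stack:
  assumes "0 < m" "m \<le> x" "0 < w"
    and top: "zeros m w \<in> S" "decomposable S (zeros m w)"
    and rest: "m < x \<Longrightarrow> padded_stack h w f (x - m) \<in> S"
  shows "decomposable S (lowered_stack m h w f x)"
proof (cases "m = x")
  case True
  then have "lowered_stack m h w f x = zeros m w"
    unfolding lowered_stack_def zeros_def by (auto intro: mk2_cong simp: vcat_fun_def)
  then show ?thesis
    using top by simp
next
  case False
  then have "m < x"
    using assms(2) by simp
  show ?thesis
    unfolding lowered_stack_def
    by (rule decomposable_vcat[OF top(1)[unfolded zeros_def] rest[unfolded padded_stack_def]])
      (use assms(1,3) \<open>m < x\<close> in simp_all)
qed

text \<open>With \<open>M' = 2^n\<close> and \<open>W = M'(n + 2)\<close>, the left block of \<open>Cstr x M\<close> is a padded stack of copies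
  of \<open>ShiftBin n\<close>, and the right block is the padded stack for \<open>x - M'\<close> below \<open>M'\<close> zero rows.\<close>

abbreviation left_block :: "nat \<Rightarrow> nat \<Rightarrow> str2" where
  "left_block n \<equiv> padded_stack (2 * 2 ^ n) (2 ^ n * (n + 2)) (shiftbin_entry n)"

abbreviation right_block :: "nat \<Rightarrow> nat \<Rightarrow> str2" where
  "right_block n \<equiv> lowered_stack (2 ^ n) (2 * 2 ^ n) (2 ^ n * (n + 2)) (shiftbin_entry n)"

definition left_right_block :: "nat \<Rightarrow> nat \<Rightarrow> str2" where
  "left_right_block n x = mk2 x (2 * (2 ^ n * (n + 2)))
     (hcat_fun (padded_stack_entry (2 * 2 ^ n) (shiftbin_entry n) x)
       (vcat_fun (\<lambda>_ _. S0) (padded_stack_entry (2 * 2 ^ n) (shiftbin_entry n) (x - 2 ^ n)) (2 ^ n))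
       (2 ^ n * (n + 2)))"

lemma C_entry_eq_hcat:
  "C_entry x M r c = hcat_fun (hcat_fun (padded_stack_entry (2 * 2 ^ Mexp M) (shiftbin_entry (Mexp M)) x)
       (vcat_fun (\<lambda>_ _. S0) (padded_stack_entry (2 * 2 ^ Mexp M) (shiftbin_entry (Mexp M)) (x - 2 ^ Mexp M))
         (2 ^ Mexp M))
       (2 ^ Mexp M * (Mexp M + 2)))
     (\<lambda>_ _. S0) (2 * (2 ^ Mexp M * (Mexp M + 2))) r c"
  unfolding C_entry_def Let_def hcat_fun_def vcat_fun_def padded_stack_entry_def by auto

lemma decomposable_left_right_block:
  assumes "0 < x" "left_block n x \<in> S" "right_block n x \<in> S"
  shows "decomposable S (left_right_block n x)"
  unfolding left_right_block_def
  by (rule decomposable_hcat[OF assms(2,3)[unfolded padded_stack_def lowered_stack_def]])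
    (use assms(1) in simp_all)

lemma decomposable_Cstr:
  assumes "2 * (2 ^ Mexp M * (Mexp M + 2)) \<le> M" "0 < x"
    and "left_block (Mexp M) x \<in> S" "right_block (Mexp M) x \<in> S" "left_right_block (Mexp M) x \<in> S"
    and pad: "2 * (2 ^ Mexp M * (Mexp M + 2)) < M \<Longrightarrow> zeros x (M - 2 * (2 ^ Mexp M * (Mexp M + 2))) \<in> S"
  shows "decomposable S (Cstr x M)"
proof (cases "2 * (2 ^ Mexp M * (Mexp M + 2)) = M")
  case True
  show ?thesis
    unfolding Cstr_def
    by (rule decomposable_hcat[OF assms(3,4)[unfolded padded_stack_def lowered_stack_def]])
      (use True assms(2) in \<open>auto simp: C_entry_eq_hcat hcat_fun_def\<close>)
next
  case False
  show ?thesis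
    unfolding Cstr_def
    by (rule decomposable_hcat[OF assms(5)[unfolded left_right_block_def] pad[unfolded zeros_def]])
      (use False assms(1,2) in \<open>auto simp: C_entry_eq_hcat\<close>)
qed

section \<open>A small SLP for the strings \<open>Cstr (N + i * b) M\<close>\<close>

lemma Mexp_width_le:
  assumes "4 \<le> M"
  shows "2 * (2 ^ Mexp M * (Mexp M + 2)) \<le> M"
proof -
  let ?fits = "\<lambda>n. real (2 ^ n * (n + 2)) \<le> real M / 2"
  have "?fits (Mexp M)"
    unfolding Mexp_def
  proof (rule GreatestI_nat[of _ 0 M])
    show "?fits 0"
      using assms by simp
    show "n \<le> M" if "?fits n" for n
    proof -
      have "n < 2 ^ n"
        by (rule less_exp)
      also have "\<dots> \<le> 2 ^ n * (n + 2)"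
        by simp
      moreover have "2 * (2 ^ n * (n + 2)) \<le> M"
        using that by linarith
      ultimately show ?thesis
        by linarith
    qed
  qed
  then show ?thesis
    by linarith
qed

locale C_progression =
  fixes N M b k :: nat
  assumes N_pos: "1 \<le> N" and M_ge_4: "4 \<le> M" and Mprime_le_N: "Mprime M \<le> N"
    and b_le_N: "b \<le> N" and Mprime_dvd_b: "Mprime M dvd b"
begin

abbreviation n :: nat where "n \<equiv> Mexp M"
abbreviation M' :: nat where "M' \<equiv> 2 ^ Mexp M"
abbreviation W :: nat where "W \<equiv> M' * (n + 2)"
abbreviation K :: nat where "K \<equiv> ceillog2 (2 * (N * M))"
abbreviation stack :: "nat \<Rightarrow> str2" where "stack \<equiv> vrep (2 * M') W (shiftbin_entry n)"

text \<open>\<open>K\<close> bounds the number of halving steps: every parameter below is at most \<open>N M\<close>.\<close>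

definition heights :: "nat set" where
  "heights = (\<lambda>i. N + i * b) ` {..k}"

definition zero_rows :: "str2 set" where
  "zero_rows = halving_family (zeros 1) K {n + 2, W, M - 2 * W}"

definition zero_columns :: "str2 set" where
  "zero_columns = halving_family (\<lambda>x. zeros x W) K {M', N mod (2 * M'), (N + M') mod (2 * M')}"

text \<open>The left block of \<open>Cstr x M\<close> consists of \<open>x div (2 * M')\<close> copies of \<open>ShiftBin n\<close>; it is
  needed for each height \<open>x\<close> and, inside the right block, for each \<open>x - M'\<close>.\<close>

definition stacks :: "str2 set" where
  "stacks = halving_family stack K {N div (2 * M'), (N - M') div (2 * M'), b div M'}
     \<union> stack ` {(N + i * b) div (2 * M') |i. i \<le> k \<and> 0 < (N + i * b) div (2 * M')}
     \<union> stack ` {(N + i * b - M') div (2 * M') |i. i \<le> k \<and> 0 < (N + i * b - M') div (2 * M')}"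

definition paddings :: "str2 set" where
  "paddings = (if 2 * W = M then {} else
     halving_family (\<lambda>x. zeros x (M - 2 * W)) K {N, b}
     \<union> (\<lambda>x. zeros x (M - 2 * W)) ` {N + i * b |i. i \<le> k \<and> 0 < N + i * b})"

definition blocks :: "str2 set" where
  "blocks = left_block n ` (heights \<union> (\<lambda>x. x - M') ` {x \<in> heights. M' < x})
     \<union> right_block n ` heights \<union> left_right_block n ` heights \<union> (\<lambda>x. Cstr x M) ` heights"

definition strings :: "str2 set" where
  "strings = bin_family n \<union> shiftbin_family n \<union> zero_squares n \<union> zero_rows \<union> zero_columns
     \<union> stacks \<union> paddings \<union> blocks"

lemma M'_le_N: "M' \<le> N"
  using Mprime_le_N by (simp add: Mprime_def)

lemma b_div_M'_mult: "b div M' * M' = b"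
  using Mprime_dvd_b by (simp add: Mprime_def)

lemma width_le: "2 * W \<le> M"
  using Mexp_width_le[OF M_ge_4] .

lemma N_le_NM: "N \<le> N * M" and M_le_NM: "M \<le> N * M" and double_N_le_NM: "2 * N \<le> N * M"
  using N_pos M_ge_4 by simp_all

lemma below_two_pow_K:
  assumes "x \<le> N * M"
  shows "x < 2 ^ K"
proof -
  have "0 < N * M"
    using N_pos M_ge_4 by simp
  then show ?thesis
    using le_two_power_ceillog2[of "2 * (N * M)"] assms by linarith
qed

lemma K_pos: "1 \<le> K"
proof -
  have "1 < (2::nat) ^ K"
    using N_pos N_le_NM by (intro below_two_pow_K) simp
  then show ?thesis
    by (cases K) auto
qed

lemma n_lt_K: "n < K"
proof -
  have "2 ^ n < (2::nat) ^ K"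
    using le_trans[OF M'_le_N N_le_NM] by (rule below_two_pow_K)
  then show ?thesis
    by simp
qed

lemma parameters_below_two_pow_K:
  "\<forall>x\<in>{n + 2, W, M - 2 * W}. x < 2 ^ K"
  "\<forall>x\<in>{M', N mod (2 * M'), (N + M') mod (2 * M')}. x < 2 ^ K"
  "\<forall>x\<in>{N div (2 * M'), (N - M') div (2 * M'), b div M'}. x < 2 ^ K"
  "\<forall>x\<in>{N, b}. x < 2 ^ K"
proof -
  have "n + 2 \<le> W"
    using mult_le_mono1[of 1 M' "n + 2"] by simp
  then have "n + 2 \<le> N * M" "W \<le> N * M" "M - 2 * W \<le> N * M"
    using width_le M_le_NM by linarith+
  then show "\<forall>x\<in>{n + 2, W, M - 2 * W}. x < 2 ^ K"
    using below_two_pow_K by blast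
  have "x mod (2 * M') < 2 * M'" for x
    by simp
  then have "M' \<le> N * M" "N mod (2 * M') \<le> N * M" "(N + M') mod (2 * M') \<le> N * M"
    using M'_le_N N_le_NM double_N_le_NM by (metis less_or_eq_imp_le order.strict_trans2 le_trans mult_le_mono2)+
  then show "\<forall>x\<in>{M', N mod (2 * M'), (N + M') mod (2 * M')}. x < 2 ^ K"
    using below_two_pow_K by blast
  have "b div M' \<le> N * M" "N div (2 * M') \<le> N * M" "(N - M') div (2 * M') \<le> N * M"
    using b_le_N N_le_NM by (meson div_le_dividend diff_le_self le_trans)+
  then show "\<forall>x\<in>{N div (2 * M'), (N - M') div (2 * M'), b div M'}. x < 2 ^ K"
    using below_two_pow_K by blast
  have "b \<le> N * M"
    using b_le_N N_le_NM by linarith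
  then show "\<forall>x\<in>{N, b}. x < 2 ^ K"
    using N_le_NM below_two_pow_K by blast
qed

lemma heights_pos: "x \<in> heights \<Longrightarrow> M' \<le> x \<and> 0 < x"
  using M'_le_N N_pos unfolding heights_def by auto

lemma bin_family_subset: "bin_family n \<subseteq> strings"
  and shiftbin_family_subset: "shiftbin_family n \<subseteq> strings"
  and zero_squares_subset: "zero_squares n \<subseteq> strings"
  and zero_rows_subset: "zero_rows \<subseteq> strings"
  and zero_columns_subset: "zero_columns \<subseteq> strings"
  and stacks_subset: "stacks \<subseteq> strings"
  and paddings_subset: "paddings \<subseteq> strings"
  and blocks_subset: "blocks \<subseteq> strings"
  unfolding strings_def by auto

lemma decomposable_zero_rows: "s \<in> zero_rows \<Longrightarrow> decomposable strings s"
  unfolding zero_rows_def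
  by (rule decomposable_halving_family[OF decomposes_additively_zeros_width[OF zero_less_one]
        decomposable_zeros_1_1 parameters_below_two_pow_K(1) zero_rows_subset[unfolded zero_rows_def]])

lemma zero_row:
  assumes "w \<in> {n + 2, W, M - 2 * W}" "0 < w"
  shows "zeros 1 w \<in> strings \<and> decomposable strings (zeros 1 w)"
proof -
  have "zeros 1 w \<in> zero_rows"
    unfolding zero_rows_def using assms by (rule seed_in_halving_family)
  then show ?thesis
    using zero_rows_subset decomposable_zero_rows by blast
qed

lemma W_pos: "0 < W"
  by simp

lemma decomposable_zero_columns:
  assumes "s \<in> zero_columns"
  shows "decomposable strings s"
proof -
  have one: "decomposable strings (zeros 1 W)"
    using zero_row[of W] by simp
  show ?thesis
    using assms unfolding zero_columns_def
    by (rule decomposable_halving_family[OF decomposes_additively_zeros_height[OF W_pos] one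
          parameters_below_two_pow_K(2) zero_columns_subset[unfolded zero_columns_def]])
qed

lemma zero_column:
  assumes "h \<in> {M', N mod (2 * M'), (N + M') mod (2 * M')}" "0 < h"
  shows "zeros h W \<in> strings \<and> decomposable strings (zeros h W)"
proof -
  have "zeros h W \<in> zero_columns"
    unfolding zero_columns_def using assms by (rule seed_in_halving_family[of _ _ "\<lambda>x. zeros x W"])
  then show ?thesis
    using zero_columns_subset decomposable_zero_columns by blast
qed

lemma ShiftBin_in_strings: "ShiftBin n \<in> strings \<and> decomposable strings (ShiftBin n)"
proof -
  have "ShiftBin n \<in> shiftbin_family n"
    by (simp add: shiftbin_family_def)
  moreover have "zeros 1 W \<in> strings"
    using zero_row[of W] by simp
  ultimately show ?thesis
    using shiftbin_family_subset zero_squares_subset bin_family_subset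
    by (auto intro: decomposable_shiftbin_family)
qed

lemma stack_step: "\<exists>d\<in>halvings K (b div M'). (a + b) div (2 * M') = a div (2 * M') + d"
proof -
  have "(a + b div M' * M') div (2 * M')
      \<in> {a div (2 * M') + b div M' div 2, a div (2 * M') + (b div M' - b div M' div 2)}"
    by (rule div_double_add_mult) simp
  then show ?thesis
    using halves_in_halvings[OF K_pos, of "b div M'"] unfolding b_div_M'_mult by blast
qed

lemma decomposable_stacks:
  assumes "s \<in> stacks"
  shows "decomposable strings s"
proof -
  have add: "decomposes_additively strings stack"
    by (rule decomposes_additively_vrep) simp_all
  have "stack 1 = ShiftBin n"
    unfolding ShiftBin_def by (rule vrep_1) simp
  then have one: "decomposable strings (stack 1)"
    using ShiftBin_in_strings by simp
  note sub = stacks_subset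
  note chain = decomposable_chain[OF add one parameters_below_two_pow_K(3)]
  have "decomposable strings (stack ((N + i * b) div (2 * M')))"
    if "i \<le> k" "0 < (N + i * b) div (2 * M')" for i
  proof (rule chain[of "\<lambda>i. (N + i * b) div (2 * M')" "b div M'" k])
    fix i
    have "N + Suc i * b = (N + i * b) + b"
      by simp
    then show "\<exists>d\<in>halvings K (b div M'). (N + Suc i * b) div (2 * M') = (N + i * b) div (2 * M') + d"
      by (simp only: stack_step)
  qed (use that sub in \<open>auto simp: stacks_def\<close>)
  moreover have "decomposable strings (stack ((N + i * b - M') div (2 * M')))"
    if "i \<le> k" "0 < (N + i * b - M') div (2 * M')" for i
  proof (rule chain[of "\<lambda>i. (N + i * b - M') div (2 * M')" "b div M'" k])
    fix i
    have "N + Suc i * b - M' = (N + i * b - M') + b"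
      using M'_le_N by simp
    then show "\<exists>d\<in>halvings K (b div M'). (N + Suc i * b - M') div (2 * M') = (N + i * b - M') div (2 * M') + d"
      by (simp only: stack_step)
  qed (use that sub in \<open>auto simp: stacks_def\<close>)
  moreover have "decomposable strings s"
    if "s \<in> halving_family stack K {N div (2 * M'), (N - M') div (2 * M'), b div M'}"
    using that sub unfolding stacks_def
    by (intro decomposable_halving_family[OF add one parameters_below_two_pow_K(3)]) auto
  ultimately show ?thesis
    using assms unfolding stacks_def by blast
qed

lemma decomposable_paddings:
  assumes "s \<in> paddings"
  shows "decomposable strings s"
proof (cases "2 * W = M")
  case True
  then show ?thesis
    using assms by (simp add: paddings_def)
next
  case False
  let ?F = "\<lambda>x. zeros x (M - 2 * W)"
  have "0 < M - 2 * W"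
    using False width_le by simp
  then have add: "decomposes_additively strings ?F" and one: "decomposable strings (?F 1)"
    using decomposes_additively_zeros_height zero_row[of "M - 2 * W"] by simp_all
  have sub: "halving_family ?F K {N, b} \<union> ?F ` {N + i * b |i. i \<le> k \<and> 0 < N + i * b} \<subseteq> strings"
    using paddings_subset False by (simp add: paddings_def)
  have "decomposable strings (?F (N + i * b))" if "i \<le> k" for i
  proof (rule decomposable_chain[OF add one parameters_below_two_pow_K(4), of "\<lambda>i. N + i * b" b k])
    show "\<exists>d\<in>halvings K b. N + Suc i * b = N + i * b + d" for i
      using self_in_halvings by auto
  qed (use that sub N_pos in auto)
  moreover have "decomposable strings s" if "s \<in> halving_family ?F K {N, b}"
    using that sub by (intro decomposable_halving_family[OF add one parameters_below_two_pow_K(4)]) auto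
  ultimately show ?thesis
    using assms False unfolding paddings_def by auto
qed

lemma height_mod:
  assumes "x \<in> heights"
  shows "x mod (2 * M') \<in> {N mod (2 * M'), (N + M') mod (2 * M')}"
    and "M' < x \<Longrightarrow> (x - M') mod (2 * M') \<in> {N mod (2 * M'), (N + M') mod (2 * M')}"
proof -
  obtain i where "x = N + i * b"
    using assms unfolding heights_def by blast
  then have x: "x = N + i * (b div M') * M'"
    using b_div_M'_mult by (simp add: mult.assoc)
  then show "x mod (2 * M') \<in> {N mod (2 * M'), (N + M') mod (2 * M')}"
    by (simp only: mod_double_add_mult)
  have "N + M' = (N - M') + 2 * M'"
    using M'_le_N by simp
  then have "(N + M') mod (2 * M') = (N - M') mod (2 * M')"
    by (simp only: mod_add_self2)
  moreover have "x - M' = (N - M') + i * (b div M') * M'"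
    unfolding x by (rule add_diff_assoc2[OF M'_le_N, symmetric])
  moreover have "N - M' + M' = N"
    using M'_le_N by simp
  ultimately show "(x - M') mod (2 * M') \<in> {N mod (2 * M'), (N + M') mod (2 * M')}"
    using mod_double_add_mult[of "N - M'" "i * (b div M')" M'] by auto
qed

lemma stack_of_height:
  assumes "x \<in> heights" "0 < x div (2 * M')"
  shows "stack (x div (2 * M')) \<in> strings \<and> decomposable strings (stack (x div (2 * M')))"
proof -
  obtain i where "i \<le> k" "x = N + i * b"
    using assms unfolding heights_def by blast
  then have "stack (x div (2 * M')) \<in> stacks"
    using assms(2) unfolding stacks_def by blast
  then show ?thesis
    using stacks_subset decomposable_stacks by blast
qed

lemma stack_of_lowered_height:
  assumes "x \<in> heights" "0 < (x - M') div (2 * M')"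
  shows "stack ((x - M') div (2 * M')) \<in> strings \<and> decomposable strings (stack ((x - M') div (2 * M')))"
proof -
  obtain i where "i \<le> k" "x = N + i * b"
    using assms unfolding heights_def by blast
  then have "stack ((x - M') div (2 * M')) \<in> stacks"
    using assms(2) unfolding stacks_def by blast
  then show ?thesis
    using stacks_subset decomposable_stacks by blast
qed

lemma decomposable_left_block:
  assumes "x \<in> heights \<union> (\<lambda>x. x - M') ` {x \<in> heights. M' < x}"
  shows "decomposable strings (left_block n x)"
proof -
  consider (height) "x \<in> heights" | (lowered) y where "y \<in> heights" "M' < y" "x = y - M'"
    using assms by blast
  then show ?thesis
  proof cases
    case height
    then show ?thesis
      using heights_pos[OF height] height_mod(1)[OF height] stack_of_height[OF height]
      by (intro decomposable_padded_stack zero_column) auto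
  next
    case lowered
    then show ?thesis
      using height_mod(2)[OF lowered(1,2)] stack_of_lowered_height[OF lowered(1)]
      by (intro decomposable_padded_stack zero_column) auto
  qed
qed

lemma decomposable_blocks:
  assumes "s \<in> blocks"
  shows "decomposable strings s"
proof -
  have left: "left_block n x \<in> strings" "left_block n (x - M') \<in> strings" if "x \<in> heights" "M' < x" for x
    using that blocks_subset unfolding blocks_def by auto
  have block_in: "left_block n x \<in> strings" "right_block n x \<in> strings"
    "left_right_block n x \<in> strings" if "x \<in> heights" for x
    using that blocks_subset unfolding blocks_def by auto
  have pad: "zeros x (M - 2 * W) \<in> strings" if "x \<in> heights" "2 * W < M" for x
  proof -
    have "x \<in> {N + i * b |i. i \<le> k \<and> 0 < N + i * b}"
      using that(1) N_pos unfolding heights_def by auto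
    then show ?thesis
      using that(2) paddings_subset unfolding paddings_def by auto
  qed
  have right: "decomposable strings (right_block n x)" if "x \<in> heights" for x
    using that heights_pos[OF that] zero_column[of M'] left[OF that]
    by (intro decomposable_lowered_stack) auto
  have "decomposable strings (left_right_block n x)" "decomposable strings (Cstr x M)"
    if "x \<in> heights" for x
  proof -
    show "decomposable strings (left_right_block n x)"
      using that heights_pos block_in by (simp add: decomposable_left_right_block)
    show "decomposable strings (Cstr x M)"
      by (rule decomposable_Cstr[OF width_le]) (use that heights_pos block_in pad in auto)
  qed
  then show ?thesis
    using assms decomposable_left_block right unfolding blocks_def by blast
qed

lemma decomposable_strings: "\<forall>s\<in>strings. decomposable strings s"
proof
  fix s assume "s \<in> strings"
  have "zeros 1 W \<in> strings" "decomposable strings (zeros 1 (n + 2))"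
    using zero_row[of W] zero_row[of "n + 2"] by simp_all
  moreover have "s \<in> bin_family n \<union> shiftbin_family n \<union> zero_squares n \<union> zero_rows \<union> zero_columns
      \<union> stacks \<union> paddings \<union> blocks"
    using \<open>s \<in> strings\<close> by (simp only: strings_def)
  ultimately show "decomposable strings s"
    by (blast intro: decomposable_bin_family[OF bin_family_subset]
        decomposable_shiftbin_family[OF shiftbin_family_subset zero_squares_subset bin_family_subset]
        decomposable_zero_squares[OF zero_squares_subset] decomposable_zero_rows
        decomposable_zero_columns decomposable_stacks decomposable_paddings decomposable_blocks)
qed

lemma finite_strings: "finite strings"
  unfolding strings_def zero_rows_def zero_columns_def stacks_def paddings_def blocks_def heights_def
  by simp

lemma Cstr_in_strings:
  assumes "i \<le> k"
  shows "Cstr (N + i * b) M \<in> strings"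
proof -
  have "N + i * b \<in> heights"
    unfolding heights_def using assms by (intro rev_image_eqI[of i]) simp_all
  then have "Cstr (N + i * b) M \<in> blocks"
    unfolding blocks_def by blast
  then show ?thesis
    using blocks_subset by blast
qed

lemma card_stacks_le: "card stacks \<le> 6 * (K + 1) + 2 * (k + 1)"
proof -
  have "card stacks \<le> 2 * (K + 1) * 3 + (k + 1) + (k + 1)"
    unfolding stacks_def
    by (intro card_Un_le_add card_halving_family_le card_image_Collect_atMost_le)
      (simp_all add: card_three_le)
  then show ?thesis
    by simp
qed

lemma card_paddings_le: "card paddings \<le> 4 * (K + 1) + (k + 1)"
proof (cases "2 * W = M")
  case True
  then show ?thesis
    by (simp add: paddings_def)
next
  case False
  have "card {N, b} \<le> 2"
    by (simp add: card_insert_if)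
  then have "card paddings \<le> 2 * (K + 1) * 2 + (k + 1)"
    unfolding paddings_def if_not_P[OF False]
    by (intro card_Un_le_add card_halving_family_le card_image_Collect_atMost_le) simp_all
  then show ?thesis
    by simp
qed

lemma card_blocks_le: "card blocks \<le> 5 * (k + 1)"
proof -
  have heights: "finite heights" "card heights \<le> k + 1"
    unfolding heights_def by (simp, rule card_image_atMost_le)
  have image_heights: "card (f ` heights) \<le> k + 1" for f :: "nat \<Rightarrow> 'a"
    using heights card_image_le[of heights f] by linarith
  have "card ((\<lambda>x. x - M') ` {x \<in> heights. M' < x}) \<le> card heights"
    using heights(1) by (intro order.trans[OF card_image_le] card_mono) auto
  then have "card (heights \<union> (\<lambda>x. x - M') ` {x \<in> heights. M' < x}) \<le> (k + 1) + (k + 1)"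
    using heights by (intro card_Un_le_add) simp_all
  then have "card (left_block n ` (heights \<union> (\<lambda>x. x - M') ` {x \<in> heights. M' < x}))
      \<le> (k + 1) + (k + 1)"
    using heights(1) by (intro order.trans[OF card_image_le]) simp_all
  then have "card blocks \<le> ((k + 1) + (k + 1)) + (k + 1) + (k + 1) + (k + 1)"
    unfolding blocks_def by (intro card_Un_le_add image_heights)
  then show ?thesis
    by simp
qed

lemma card_strings_le: "card strings \<le> 33 * (K + 1) + 8 * (k + 1) + 1"
proof -
  have "n + 1 \<le> K + 1"
    using n_lt_K by simp
  then have "card (bin_family n) \<le> 6 * (K + 1)" "card (shiftbin_family n) \<le> 3 * (K + 1) + 1"
    "card (zero_squares n) \<le> 2 * (K + 1)"
    using card_bin_family_le[of n] card_shiftbin_family_le[of n] card_zero_squares_le[of n]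
    by (simp_all add: algebra_simps)
  moreover have "card zero_rows \<le> 2 * (K + 1) * 3"
    unfolding zero_rows_def by (intro card_halving_family_le card_three_le) simp
  moreover have "card zero_columns \<le> 2 * (K + 1) * 3"
    unfolding zero_columns_def by (intro card_halving_family_le card_three_le) simp
  ultimately have "card strings \<le> 6 * (K + 1) + (3 * (K + 1) + 1) + 2 * (K + 1)
      + 2 * (K + 1) * 3 + 2 * (K + 1) * 3 + (6 * (K + 1) + 2 * (k + 1))
      + (4 * (K + 1) + (k + 1)) + 5 * (k + 1)"
    unfolding strings_def
    by (intro card_Un_le_add card_stacks_le card_paddings_le card_blocks_le)
  then show ?thesis
    by simp
qed

lemma card_strings_le_log: "real (card strings) \<le> 100 * (log 2 (real N) + log 2 (real M) + real k)"
proof -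
  have "real K < log 2 (real (2 * (N * M))) + 1"
    using N_pos M_ge_4 by (intro ceillog2_less_log) simp
  also have "log 2 (real (2 * (N * M))) = 1 + log 2 (real N) + log 2 (real M)"
    using N_pos M_ge_4 by (simp add: log_mult)
  finally have "real K < log 2 (real N) + log 2 (real M) + 2"
    by simp
  moreover have "2 \<le> log 2 (real M)"
    using le_log_of_power[of 2 2 "real M"] M_ge_4 by simp
  moreover have "0 \<le> log 2 (real N)"
    using N_pos by simp
  moreover have "real (card strings) \<le> real (33 * (K + 1) + 8 * (k + 1) + 1)"
    using card_strings_le by (simp only: of_nat_le_iff)
  then have "real (card strings) \<le> 33 * (real K + 1) + 8 * (real k + 1) + 1"
    by simp
  moreover have "0 \<le> real k"
    by simp
  ultimately show ?thesis
    by argo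
qed

lemma slp_for_C_progression:
  "\<exists>G. is_slp2 G \<and> real (card (nts G)) \<le> 100 * (log 2 (real N) + log 2 (real M) + real k) \<and>
     (\<forall>i\<le>k. \<exists>X\<in>nts G. derives G X (Cstr (N + i * b) M))"
proof -
  have "strings \<noteq> {}"
    using Cstr_in_strings[of 0] by auto
  then obtain G where "is_slp2 G" "card (nts G) = card strings"
    "\<forall>s\<in>strings. \<exists>X\<in>nts G. derives G X s"
    using slp_of_decomposable_set[OF finite_strings _ decomposable_strings] by blast
  then show ?thesis
    using card_strings_le_log Cstr_in_strings by auto
qed

end

theorem mainTheorem9:
  shows "\<exists>c::real. c > 0 \<and>
    (\<forall>N M b k :: nat. N \<ge> 1 \<longrightarrow> M \<ge> 4 \<longrightarrow> Mprime M \<le> N \<longrightarrow>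
       0 < b \<longrightarrow> b \<le> N \<longrightarrow> Mprime M dvd b \<longrightarrow>
       (\<exists>G. is_slp2 G \<and>
          real (card (nts G)) \<le> c * (log 2 (real N) + log 2 (real M) + real k) \<and>
          (\<forall>i\<le>k. \<exists>X\<in>nts G. derives G X (Cstr (N + i * b) M))))"
proof (intro exI[of _ 100] conjI allI impI)
  fix N M b k :: nat
  assume "N \<ge> 1" "M \<ge> 4" "Mprime M \<le> N" "b \<le> N" "Mprime M dvd b"
  then interpret C_progression N M b k
    by unfold_locales
  show "\<exists>G. is_slp2 G \<and>
      real (card (nts G)) \<le> 100 * (log 2 (real N) + log 2 (real M) + real k) \<and>
      (\<forall>i\<le>k. \<exists>X\<in>nts G. derives G X (Cstr (N + i * b) M))"
    by (rule slp_for_C_progression)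
qed simp

end
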